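(* Fix $x\in\mathbf{X}\cup\mathbf{X}^+$. (i) Suppose $H_{TP^+}(x)\le\delta$, and define OOD detectors by $\mathbf{P}'_k(x\in\mathbf{X}_k\mid D)=\mathbf{P}(x\in\mathbf{X}_k\mid D)$, $k=1,\dots,T$. Then $H_{OOD^+,k}(x)\le\delta$ for all $k=1,\dots,T$. (ii) Suppose OOD detectors satisfy $H_{OOD^+,k}(x)\le\delta_k$ for $k=1,\dots,T$, and define the open-world task-id prediction by $$\mathbf{P}(x\in\mathbf{X}_k\mid D)=\frac{\mathbf{P}'_k(x\in\mathbf{X}_k\mid D)}{\sum_{k'}\mathbf{P}'_{k'}(x\in\mathbf{X}_{k'}\mid D)+\prod_{k'}(1-\mathbf{P}'_{k'}(x\in\mathbf{X}_{k'}\mid D))},\qquad \mathbf{P}(x\in\mathbf{X}^+\mid D)=\frac{\prod_{k'}(1-\mathbf{P}'_{k'}(x\in\mathbf{X}_{k'}\mid D))}{\sum_{k'}\mathbf{P}'_{k'}(x\in\mathbf{X}_{k'}\mid D)+\prod_{k'}(1-\mathbf{P}'_{k'}(x\in\mathbf{X}_{k'}\mid D))}.$$ Then $$H_{TP^+}(x)\le\max\Big(\big(\textstyle\sum_k\mathbf{1}_{x\in\mathbf{X}_k}e^{\delta_k}\big)\big(\sum_k(1+\mathbf{1}_{x\in\mathbf{X}_k})(1-e^{-\delta_k})\big),\ \prod_k e^{\delta_k}\sum_k(1-e^{-\delta_k})\Big),$$ where $\mathbf{1}_{x\in\mathbf{X}_k}$ is the indicator of $x\in\mathbf{X}_k$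.
   Context: Open-world setting. $\mathbf{X}$ is the disjoint union of task domains $\mathbf{X}_1,\dots,\mathbf{X}_T$, and $\mathbf{X}^+$ is an open-world OOD domain disjoint from $\mathbf{X}$. $D$ is a fixed conditioning event. An open-world task-id prediction (TP$^+$) is a probability distribution over the $T+1$ outcomes $\{\mathbf{P}(x\in\mathbf{X}_k\mid D)\}_{k=1}^T\cup\{\mathbf{P}(x\in\mathbf{X}^+\mid D)\}$ (nonnegative, summing to $1$), with $H_{TP^+}(x)=-\log\mathbf{P}(x\in\mathbf{X}_{k_0}\mid D)$ if $x\in\mathbf{X}_{k_0}$ and $H_{TP^+}(x)=-\log\mathbf{P}(x\in\mathbf{X}^+\mid D)$ if $x\in\mathbf{X}^+$. An OOD detector for task $k$ is a value $\mathbf{P}'_k(x\in\mathbf{X}_k\mid D)\in[0,1]$ with $\mathbf{P}'_k(x\in(\mathbf{X}\cup\mathbf{X}^+)\setminus\mathbf{X}_k\mid D)=1-\mathbf{P}'_k(x\in\mathbf{X}_k\mid D)$; its open-world cross-entropy is $H_{OOD^+,k}(x)=-\log\mathbf{P}'_k(x\in\mathbf{X}_k\mid D)$ if $x\in\mathbf{X}_k$ and $H_{OOD^+,k}(x)=-\log\mathbf{P}'_k(x\in(\mathbf{X}\cup\mathbf{X}^+)\setminus\mathbf{X}_k\mid D)$ if $x\in(\mathbf{X}\cup\mathbf{X}^+)\setminus\mathbf{X}_k$. *)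

theory Defs
  imports "HOL-Library.Extended_Real" "HOL-Library.Disjoint_Sets"
begin

definition neglog :: "real \<Rightarrow> ereal" where
  "neglog p = (if p > 0 then ereal (- ln p) else \<infinity>)"

definition open_world :: "nat \<Rightarrow> (nat \<Rightarrow> 'a set) \<Rightarrow> 'a set \<Rightarrow> bool" where
  "open_world T Xs Xp \<longleftrightarrow> disjoint_family_on Xs {1..T} \<and> Xp \<inter> (\<Union>k\<in>{1..T}. Xs k) = {}"

text \<open>An open-world task-id prediction: P k = P(x in X_k | D), Pplus = P(x in X^+ | D).\<close>
definition is_TP :: "nat \<Rightarrow> (nat \<Rightarrow> real) \<Rightarrow> real \<Rightarrow> bool" where
  "is_TP T P Pplus \<longleftrightarrow> (\<forall>k\<in>{1..T}. 0 \<le> P k) \<and> 0 \<le> Pplus \<and> (\<Sum>k\<in>{1..T}. P k) + Pplus = 1"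

definition H_TP :: "nat \<Rightarrow> (nat \<Rightarrow> 'a set) \<Rightarrow> (nat \<Rightarrow> real) \<Rightarrow> real \<Rightarrow> 'a \<Rightarrow> ereal" where
  "H_TP T Xs P Pplus x =
     (if \<exists>k\<in>{1..T}. x \<in> Xs k then neglog (P (THE k. k \<in> {1..T} \<and> x \<in> Xs k))
      else neglog Pplus)"

text \<open>Open-world cross-entropy of the OOD detector for task k; P' k = P'_k(x in X_k | D).\<close>
definition H_OOD :: "(nat \<Rightarrow> 'a set) \<Rightarrow> (nat \<Rightarrow> real) \<Rightarrow> nat \<Rightarrow> 'a \<Rightarrow> ereal" where
  "H_OOD Xs P' k x = (if x \<in> Xs k then neglog (P' k) else neglog (1 - P' k))"

definition ood_denom :: "nat \<Rightarrow> (nat \<Rightarrow> real) \<Rightarrow> real" where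
  "ood_denom T P' = (\<Sum>k\<in>{1..T}. P' k) + (\<Prod>k\<in>{1..T}. 1 - P' k)"

end

theory Submission
  imports Defs
begin

text \<open>Everything rests on -log being antitone. (i) If x lies in X_k0, then P_k0 \<le> 1 - P_k
  for k \<noteq> k0, and P(X^+) \<le> 1 - P_k for all k, so each complementary detector score is at least
  the score the TP assigns to the true outcome. (ii) Each TP score has the form a / (a + b), and
  -log (a / (a + b)) = log (1 + b / a) \<le> b / a. The detector bounds give a \<ge> exp (-\<delta>_k0), or
  a = \<Prod>_k (1 - P'_k) \<ge> \<Prod>_k exp (-\<delta>_k) outside the tasks, and bound the rest b of the
  denominator by \<Sum>_k (1 - exp (-\<delta>_k)).\<close>

lemma neglog_le_ereal_iff: "neglog p \<le> ereal d \<longleftrightarrow> 0 < p \<and> exp (- d) \<le> p"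
  by (auto simp: neglog_def ln_ge_iff[symmetric])

lemma neglog_antimono: "0 < p \<Longrightarrow> p \<le> q \<Longrightarrow> neglog q \<le> neglog p"
  by (simp add: neglog_def)

lemma neglog_ratio_le:
  assumes "0 < a" "0 \<le> b"
  shows "neglog (a / (a + b)) \<le> ereal (b / a)"
proof -
  have "- ln (a / (a + b)) = ln (1 + b / a)"
    using assms by (simp add: ln_div field_simps)
  also have "\<dots> \<le> b / a"
    using assms by (intro ln_add_one_self_le_self) simp
  finally show ?thesis
    using assms by (simp add: neglog_def)
qed

lemma neglog_ratio_le_exp:
  assumes "exp (- c) \<le> a" "0 \<le> b" "b \<le> E"
  shows "neglog (a / (a + b)) \<le> ereal (E * exp c)"
proof -
  have a: "0 < a" using assms(1) exp_gt_zero order_less_le_trans by blast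
  have "b / a \<le> E / exp (- c)"
    using assms a by (intro frac_le) auto
  then have "b / a \<le> E * exp c"
    by (simp add: exp_minus divide_inverse)
  then show ?thesis
    using neglog_ratio_le[OF a assms(2)] by (meson ereal_less_eq(3) order_trans)
qed

lemma prod_one_minus_le_one_minus:
  fixes f :: "'a \<Rightarrow> real"
  assumes "finite I" "i \<in> I" "\<And>k. k \<in> I \<Longrightarrow> 0 \<le> f k \<and> f k \<le> 1"
  shows "(\<Prod>k\<in>I. 1 - f k) \<le> 1 - f i"
proof -
  have "(\<Prod>k\<in>I. 1 - f k) = (1 - f i) * (\<Prod>k\<in>I - {i}. 1 - f k)"
    using assms(1,2) by (simp add: prod.remove)
  also have "\<dots> \<le> (1 - f i) * 1"
    using assms by (intro mult_left_mono prod_le_1) auto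
  finally show ?thesis by simp
qed

lemma is_TP_le_one_minus:
  assumes "is_TP T P Pplus" "k \<in> {1..T}" "j \<in> {1..T}" "k \<noteq> j"
  shows "P j \<le> 1 - P k"
proof -
  have "P k + P j = (\<Sum>i\<in>{k, j}. P i)"
    using assms(4) by simp
  also have "\<dots> \<le> (\<Sum>i\<in>{1..T}. P i)"
    using assms by (intro sum_mono2) (auto simp: is_TP_def)
  finally show ?thesis
    using assms(1) by (simp add: is_TP_def)
qed

lemma is_TP_Pplus_le_one_minus:
  assumes "is_TP T P Pplus" "k \<in> {1..T}"
  shows "Pplus \<le> 1 - P k"
proof -
  have "P k \<le> (\<Sum>i\<in>{1..T}. P i)"
    using assms by (intro member_le_sum) (auto simp: is_TP_def)
  then show ?thesis
    using assms(1) by (simp add: is_TP_def)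
qed

lemma H_TP_task:
  assumes "disjoint_family_on Xs {1..T}" "k0 \<in> {1..T}" "x \<in> Xs k0"
  shows "H_TP T Xs P Pplus x = neglog (P k0)"
proof -
  have "(THE k. k \<in> {1..T} \<and> x \<in> Xs k) = k0"
    using assms by (intro the_equality) (auto dest: disjoint_family_onD)
  then show ?thesis
    using assms by (auto simp: H_TP_def)
qed

lemma H_TP_outside: "\<forall>k\<in>{1..T}. x \<notin> Xs k \<Longrightarrow> H_TP T Xs P Pplus x = neglog Pplus"
  by (simp add: H_TP_def)

lemma H_OOD_le_of_H_TP_le:
  assumes disj: "disjoint_family_on Xs {1..T}" and TP: "is_TP T P Pplus"
    and H: "H_TP T Xs P Pplus x \<le> ereal \<delta>" and k: "k \<in> {1..T}"
  shows "H_OOD Xs P k x \<le> ereal \<delta>"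
proof (cases "\<exists>k0\<in>{1..T}. x \<in> Xs k0")
  case True
  then obtain k0 where k0: "k0 \<in> {1..T}" "x \<in> Xs k0" by blast
  with H have Hk0: "neglog (P k0) \<le> ereal \<delta>"
    by (simp add: H_TP_task[OF disj])
  show ?thesis
  proof (cases "k = k0")
    case True
    with Hk0 k0 show ?thesis by (simp add: H_OOD_def)
  next
    case False
    then have "x \<notin> Xs k"
      using disj k k0 by (auto dest: disjoint_family_onD)
    moreover have "neglog (1 - P k) \<le> neglog (P k0)"
      using Hk0 is_TP_le_one_minus[OF TP k k0(1) False]
      by (intro neglog_antimono) (auto simp: neglog_le_ereal_iff)
    ultimately show ?thesis
      using Hk0 by (simp add: H_OOD_def)
  qed
next
  case False
  with H have Hplus: "neglog Pplus \<le> ereal \<delta>"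
    by (simp add: H_TP_outside)
  have "neglog (1 - P k) \<le> neglog Pplus"
    using Hplus is_TP_Pplus_le_one_minus[OF TP k]
    by (intro neglog_antimono) (auto simp: neglog_le_ereal_iff)
  then show ?thesis
    using False Hplus k by (auto simp: H_OOD_def)
qed

lemma H_OOD_le_ereal_iff:
  "H_OOD Xs P k x \<le> ereal d \<longleftrightarrow>
    (if x \<in> Xs k then 0 < P k \<and> exp (- d) \<le> P k else 0 < 1 - P k \<and> exp (- d) \<le> 1 - P k)"
  by (simp add: H_OOD_def neglog_le_ereal_iff)

lemma neglog_ood_denom_task_le:
  fixes P' \<delta> :: "nat \<Rightarrow> real"
  assumes P': "\<forall>k\<in>{1..T}. 0 \<le> P' k \<and> P' k \<le> 1" and k0: "k0 \<in> {1..T}"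
    and inside: "exp (- \<delta> k0) \<le> P' k0"
    and others: "\<forall>k\<in>{1..T} - {k0}. P' k \<le> 1 - exp (- \<delta> k)"
  shows "neglog (P' k0 / ood_denom T P') \<le> ereal ((\<Sum>k\<in>{1..T}. 1 - exp (- \<delta> k)) * exp (\<delta> k0))"
proof -
  define b where "b = (\<Sum>k\<in>{1..T} - {k0}. P' k) + (\<Prod>k\<in>{1..T}. 1 - P' k)"
  have "ood_denom T P' = P' k0 + b"
    using k0 by (simp add: ood_denom_def b_def sum.remove)
  moreover have "0 \<le> b"
    using P' by (auto simp: b_def intro!: add_nonneg_nonneg sum_nonneg prod_nonneg)
  moreover have "b \<le> (\<Sum>k\<in>{1..T}. 1 - exp (- \<delta> k))"
  proof -
    have "(\<Sum>k\<in>{1..T} - {k0}. P' k) \<le> (\<Sum>k\<in>{1..T} - {k0}. 1 - exp (- \<delta> k))"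
      using others by (intro sum_mono) auto
    moreover have "(\<Prod>k\<in>{1..T}. 1 - P' k) \<le> 1 - exp (- \<delta> k0)"
      using prod_one_minus_le_one_minus[of "{1..T}" k0 P'] k0 P' inside by simp
    ultimately show ?thesis
      using k0 by (simp add: b_def sum.remove)
  qed
  ultimately show ?thesis
    using neglog_ratio_le_exp[OF inside] by simp
qed

lemma neglog_ood_denom_outside_le:
  fixes P' \<delta> :: "nat \<Rightarrow> real"
  assumes "\<And>k. k \<in> {1..T} \<Longrightarrow> 0 \<le> P' k \<and> exp (- \<delta> k) \<le> 1 - P' k"
  shows "neglog ((\<Prod>k\<in>{1..T}. 1 - P' k) / ood_denom T P')
    \<le> ereal ((\<Prod>k\<in>{1..T}. exp (\<delta> k)) * (\<Sum>k\<in>{1..T}. 1 - exp (- \<delta> k)))"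
proof -
  have "exp (- (\<Sum>k\<in>{1..T}. \<delta> k)) = (\<Prod>k\<in>{1..T}. exp (- \<delta> k))"
    by (simp add: exp_sum sum_negf[symmetric])
  also have "\<dots> \<le> (\<Prod>k\<in>{1..T}. 1 - P' k)"
    using assms by (intro prod_mono) auto
  finally have "neglog ((\<Prod>k\<in>{1..T}. 1 - P' k) / ((\<Prod>k\<in>{1..T}. 1 - P' k) + (\<Sum>k\<in>{1..T}. P' k)))
      \<le> ereal ((\<Sum>k\<in>{1..T}. 1 - exp (- \<delta> k)) * exp (\<Sum>k\<in>{1..T}. \<delta> k))"
    using assms by (intro neglog_ratio_le_exp sum_nonneg sum_mono) (simp_all add: le_diff_eq add.commute)
  then show ?thesis
    by (simp add: ood_denom_def exp_sum add.commute mult.commute)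
qed

lemma indicator_sums_ge:
  fixes \<delta> :: "nat \<Rightarrow> real"
  assumes k0: "k0 \<in> {1..T}" and unique: "\<forall>k\<in>{1..T}. x \<in> Xs k \<longleftrightarrow> k = k0"
    and "0 \<le> \<delta> k0"
  shows "(\<Sum>k\<in>{1..T}. 1 - exp (- \<delta> k)) * exp (\<delta> k0)
    \<le> (\<Sum>k\<in>{1..T}. (if x \<in> Xs k then 1 else 0) * exp (\<delta> k)) *
       (\<Sum>k\<in>{1..T}. (1 + (if x \<in> Xs k then 1 else 0)) * (1 - exp (- \<delta> k)))"
proof -
  have "(\<Sum>k\<in>{1..T}. (if x \<in> Xs k then 1 else 0) * exp (\<delta> k))
      = (\<Sum>k\<in>{1..T}. if k = k0 then exp (\<delta> k) else 0)"
    using unique by (intro sum.cong) auto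
  also have "\<dots> = exp (\<delta> k0)"
    using k0 by simp
  finally have indicator_exp: "(\<Sum>k\<in>{1..T}. (if x \<in> Xs k then 1 else 0) * exp (\<delta> k))
      = exp (\<delta> k0)" .
  have "(\<Sum>k\<in>{1..T}. (1 + (if x \<in> Xs k then 1 else 0)) * (1 - exp (- \<delta> k)))
      = (\<Sum>k\<in>{1..T}. (1 - exp (- \<delta> k)) + (if k = k0 then 1 - exp (- \<delta> k) else 0))"
    using unique by (intro sum.cong) auto
  also have "\<dots> = (\<Sum>k\<in>{1..T}. 1 - exp (- \<delta> k)) + (1 - exp (- \<delta> k0))"
    using k0 by (simp add: sum.distrib)
  finally have indicator_weight: "(\<Sum>k\<in>{1..T}. (1 + (if x \<in> Xs k then 1 else 0)) *
      (1 - exp (- \<delta> k))) = (\<Sum>k\<in>{1..T}. 1 - exp (- \<delta> k)) + (1 - exp (- \<delta> k0))" .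
  show ?thesis
    unfolding indicator_exp indicator_weight using assms(3) by (simp add: algebra_simps)
qed

lemma H_TP_of_H_OOD_le:
  assumes disj: "disjoint_family_on Xs {1..T}"
    and P': "\<forall>k\<in>{1..T}. 0 \<le> P' k \<and> P' k \<le> 1"
    and H: "\<forall>k\<in>{1..T}. H_OOD Xs P' k x \<le> ereal (\<delta> k)"
  shows "H_TP T Xs (\<lambda>k. P' k / ood_denom T P') ((\<Prod>k\<in>{1..T}. 1 - P' k) / ood_denom T P') x
    \<le> ereal (max
         ((\<Sum>k\<in>{1..T}. (if x \<in> Xs k then 1 else 0) * exp (\<delta> k)) *
          (\<Sum>k\<in>{1..T}. (1 + (if x \<in> Xs k then 1 else 0)) * (1 - exp (- \<delta> k))))
         ((\<Prod>k\<in>{1..T}. exp (\<delta> k)) * (\<Sum>k\<in>{1..T}. 1 - exp (- \<delta> k))))"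
    (is "?H \<le> ereal (max ?task ?ood)")
proof (cases "\<exists>k0\<in>{1..T}. x \<in> Xs k0")
  case True
  then obtain k0 where k0: "k0 \<in> {1..T}" "x \<in> Xs k0" by blast
  have unique: "\<forall>k\<in>{1..T}. x \<in> Xs k \<longleftrightarrow> k = k0"
    using disj k0 unfolding disjoint_family_on_def by blast
  have inside: "exp (- \<delta> k0) \<le> P' k0"
    using H k0 by (auto simp: H_OOD_le_ereal_iff)
  have \<delta>_nonneg: "0 \<le> \<delta> k0"
  proof -
    have "exp (- \<delta> k0) \<le> 1"
      using inside P' k0(1) by (meson order_trans)
    then show ?thesis by simp
  qed
  have others: "\<forall>k\<in>{1..T} - {k0}. P' k \<le> 1 - exp (- \<delta> k)"
    using H unique by (fastforce simp: H_OOD_le_ereal_iff)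
  have "?H = neglog (P' k0 / ood_denom T P')"
    using H_TP_task[OF disj k0] by simp
  also have "\<dots> \<le> ereal ((\<Sum>k\<in>{1..T}. 1 - exp (- \<delta> k)) * exp (\<delta> k0))"
    using P' k0(1) inside others by (rule neglog_ood_denom_task_le)
  also have "\<dots> \<le> ereal ?task"
    using indicator_sums_ge[where \<delta> = \<delta>, OF k0(1) unique \<delta>_nonneg] by simp
  finally show ?thesis
    by (simp add: le_max_iff_disj)
next
  case False
  then have "?H = neglog ((\<Prod>k\<in>{1..T}. 1 - P' k) / ood_denom T P')"
    by (simp add: H_TP_outside)
  also have "\<dots> \<le> ereal ?ood"
    using H P' False by (intro neglog_ood_denom_outside_le) (auto simp: H_OOD_le_ereal_iff)
  finally show ?thesis
    by (simp add: le_max_iff_disj)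
qed

theorem corollary2:
  fixes T :: nat and Xs :: "nat \<Rightarrow> 'a set" and Xp :: "'a set" and x :: 'a
  assumes "open_world T Xs Xp"
    and "x \<in> (\<Union>k\<in>{1..T}. Xs k) \<union> Xp"
  shows "(\<forall>(P :: nat \<Rightarrow> real) Pplus (\<delta> :: real).
            is_TP T P Pplus \<and> H_TP T Xs P Pplus x \<le> ereal \<delta>
            \<longrightarrow> (\<forall>k\<in>{1..T}. H_OOD Xs P k x \<le> ereal \<delta>))
       \<and> (\<forall>(P' :: nat \<Rightarrow> real) (\<delta> :: nat \<Rightarrow> real).
            (\<forall>k\<in>{1..T}. 0 \<le> P' k \<and> P' k \<le> 1) \<and>
            (\<forall>k\<in>{1..T}. H_OOD Xs P' k x \<le> ereal (\<delta> k))
            \<longrightarrow> H_TP T Xs (\<lambda>k. P' k / ood_denom T P')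
                   ((\<Prod>k\<in>{1..T}. 1 - P' k) / ood_denom T P') x
                \<le> ereal (max
                     ((\<Sum>k\<in>{1..T}. (if x \<in> Xs k then 1 else 0) * exp (\<delta> k)) *
                      (\<Sum>k\<in>{1..T}. (1 + (if x \<in> Xs k then 1 else 0)) * (1 - exp (- \<delta> k))))
                     ((\<Prod>k\<in>{1..T}. exp (\<delta> k)) * (\<Sum>k\<in>{1..T}. 1 - exp (- \<delta> k)))))"
proof -
  have disj: "disjoint_family_on Xs {1..T}"
    using assms(1) by (simp add: open_world_def)
  show ?thesis
    using H_OOD_le_of_H_TP_le[OF disj] H_TP_of_H_OOD_le[OF disj] by blast
qed

end
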